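(* Let $R$ be a commutative Noetherian ring of prime characteristic $p$, suppose $c$ is a $p^{w_0}$-weak test element for $R$, and let $\mathfrak{a}$ be an ideal of $R$. Let $H(\mathfrak{a})=\bigoplus_{n\ge0}R/\mathfrak{a}^{[p^n]}$ and $G(\mathfrak{a})=\bigoplus_{n\ge0}R/(\mathfrak{a}^{[p^n]})^F$ be the graded left $R[x,f]$-modules in which $x$ sends the class of $r$ in degree $n$ to the class of $r^p$ in degree $n+1$. Then (i) $\operatorname{ann}_{H(\mathfrak{a})}(\bigoplus_{n\ge w_0}Rcx^n)=\bigoplus_{n\ge0}(\mathfrak{a}^{[p^n]})^*/\mathfrak{a}^{[p^n]}$; (ii) $\operatorname{ann}_{G(\mathfrak{a})}(\bigoplus_{n\ge0}Rcx^n)=\bigoplus_{n\ge0}(\mathfrak{a}^{[p^n]})^*/(\mathfrak{a}^{[p^n]})^F$.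
   Context: $R[x,f]$ is the Frobenius skew polynomial ring: free left $R$-module on $(x^i)_{i\ge0}$, $xr=r^px$. For a subset $\mathfrak{B}$ of $R[x,f]$, $\operatorname{ann}_M\mathfrak{B}=\{m\in M:\theta m=0\ \forall\theta\in\mathfrak{B}\}$. $\mathfrak{a}^{[p^n]}$ is generated by $p^n$-th powers of elements of $\mathfrak{a}$; $\mathfrak{a}^F=\{r: r^{p^n}\in\mathfrak{a}^{[p^n]}\text{ for some }n\}$ (Frobenius closure); $R^\circ$ the complement of the union of minimal primes; $\mathfrak{a}^*$ tight closure. A $p^{w_0}$-weak test element is $c\in R^\circ$ such that for every ideal $\mathfrak{b}$ and $r\in R$: $r\in\mathfrak{b}^*$ iff $cr^{p^n}\in\mathfrak{b}^{[p^n]}$ for all $n\ge w_0$. *)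

theory Defs
  imports Main "HOL-Computational_Algebra.Primes"
begin

definition is_ideal :: "'a::comm_ring_1 set \<Rightarrow> bool" where
  "is_ideal I \<longleftrightarrow> 0 \<in> I \<and> (\<forall>x\<in>I. \<forall>y\<in>I. x + y \<in> I) \<and> (\<forall>r. \<forall>x\<in>I. r * x \<in> I)"

definition ideal_gen :: "'a::comm_ring_1 set \<Rightarrow> 'a set" where
  "ideal_gen S = \<Inter>{I. is_ideal I \<and> S \<subseteq> I}"

definition noetherian_ring :: "'a::comm_ring_1 itself \<Rightarrow> bool" where
  "noetherian_ring _ \<longleftrightarrow> (\<forall>I::'a set. is_ideal I \<longrightarrow> (\<exists>S. finite S \<and> I = ideal_gen S))"

definition prime_ideal :: "'a::comm_ring_1 set \<Rightarrow> bool" where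
  "prime_ideal P \<longleftrightarrow> is_ideal P \<and> P \<noteq> UNIV \<and> (\<forall>x y. x * y \<in> P \<longrightarrow> x \<in> P \<or> y \<in> P)"

definition minimal_prime :: "'a::comm_ring_1 set \<Rightarrow> bool" where
  "minimal_prime P \<longleftrightarrow> prime_ideal P \<and> (\<forall>Q. prime_ideal Q \<and> Q \<subseteq> P \<longrightarrow> Q = P)"

definition R_circ :: "'a::comm_ring_1 set" where
  "R_circ = {c. \<forall>P. minimal_prime P \<longrightarrow> c \<notin> P}"

definition frob_bracket :: "nat \<Rightarrow> nat \<Rightarrow> 'a::comm_ring_1 set \<Rightarrow> 'a set" where
  "frob_bracket p n a = ideal_gen ((\<lambda>r. r ^ (p ^ n)) ` a)"

definition frob_closure :: "nat \<Rightarrow> 'a::comm_ring_1 set \<Rightarrow> 'a set" where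
  "frob_closure p a = {r. \<exists>n. r ^ (p ^ n) \<in> frob_bracket p n a}"

definition tight_closure :: "nat \<Rightarrow> 'a::comm_ring_1 set \<Rightarrow> 'a set" where
  "tight_closure p a = {r. \<exists>c\<in>R_circ. \<exists>n0. \<forall>n\<ge>n0. c * r ^ (p ^ n) \<in> frob_bracket p n a}"

definition weak_test_element :: "nat \<Rightarrow> nat \<Rightarrow> 'a::comm_ring_1 \<Rightarrow> bool" where
  "weak_test_element p w0 c \<longleftrightarrow> c \<in> R_circ \<and>
     (\<forall>b r. is_ideal b \<longrightarrow>
        (r \<in> tight_closure p b \<longleftrightarrow> (\<forall>n\<ge>w0. c * r ^ (p ^ n) \<in> frob_bracket p n b)))"

text \<open>An element of R[x,f] is a finitely supported
  coefficient sequence theta (theta = sum theta_i x^i); an element of a graded module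
  of the form (direct sum over n of R/J_n) is represented by a finitely supported
  sequence h of representatives (h_n a representative of the degree-n component).\<close>
definition fin_supp :: "(nat \<Rightarrow> 'a::zero) \<Rightarrow> bool" where
  "fin_supp h \<longleftrightarrow> (\<exists>N. \<forall>n\<ge>N. h n = 0)"

text \<open>Action of R[x,f] on such graded modules: x maps the class of r in degree n to
  the class of r^p in degree n+1, so (theta . h)_k = sum_{i<=k} theta_i h_{k-i}^(p^i).\<close>
definition frob_act :: "nat \<Rightarrow> (nat \<Rightarrow> 'a::comm_ring_1) \<Rightarrow> (nat \<Rightarrow> 'a) \<Rightarrow> nat \<Rightarrow> 'a" where
  "frob_act p \<theta> h k = (\<Sum>i\<le>k. \<theta> i * (h (k - i)) ^ (p ^ i))"

text \<open>Annihilator, in the module (direct sum over n of R/J n), of a set B of elements of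
  R[x,f]; an element is zero iff each component lies in J k.\<close>
definition graded_ann :: "nat \<Rightarrow> (nat \<Rightarrow> 'a::comm_ring_1 set) \<Rightarrow> (nat \<Rightarrow> 'a) set \<Rightarrow> (nat \<Rightarrow> 'a) set" where
  "graded_ann p J B = {h. fin_supp h \<and> (\<forall>\<theta>\<in>B. \<forall>k. frob_act p \<theta> h k \<in> J k)}"

definition cx_sum :: "'a::comm_ring_1 \<Rightarrow> nat \<Rightarrow> (nat \<Rightarrow> 'a) set" where
  "cx_sum c w = {\<theta>. fin_supp \<theta> \<and> (\<forall>i. i < w \<longrightarrow> \<theta> i = 0) \<and> (\<forall>i. \<exists>r. \<theta> i = r * c)}"

end

theory Submission
  imports Defs
begin

(* The annihilator of the sum of the R c x^i with i >= w is cut out by the monomials c x^i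
  alone, and c x^i sends the class of r in degree n to c r^(p^i) in degree n + i. As
  (a^[p^n])^[p^i] = a^[p^(n+i)], part (i) is then literally the test element criterion for
  r in (a^[p^n])^*. For part (ii) one shows that r lies in b^* iff c r^(p^i) lies in the
  Frobenius closure of b^[p^i] for every i: forwards, c^(p^w0 - 1) * c r^(p^(i+w0)) is the
  p^w0-th power of c r^(p^i); backwards, Frobenius closure is contained in tight closure, and
  testing c r^(p^i) with c itself shows that c^(1 + p^w0) is a tight closure multiplier
  for r. *)

lemma is_ideal_ideal_gen: "is_ideal (ideal_gen S)"
  unfolding is_ideal_def ideal_gen_def by (simp add: is_ideal_def)

lemma ideal_gen_superset: "S \<subseteq> ideal_gen S"
  unfolding ideal_gen_def by blast

lemma ideal_gen_minimal: "is_ideal I \<Longrightarrow> S \<subseteq> I \<Longrightarrow> ideal_gen S \<subseteq> I"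
  unfolding ideal_gen_def by blast

lemma ideal_zero: "is_ideal I \<Longrightarrow> 0 \<in> I"
  unfolding is_ideal_def by blast

lemma ideal_add: "is_ideal I \<Longrightarrow> x \<in> I \<Longrightarrow> y \<in> I \<Longrightarrow> x + y \<in> I"
  unfolding is_ideal_def by blast

lemma ideal_mult: "is_ideal I \<Longrightarrow> x \<in> I \<Longrightarrow> r * x \<in> I"
  unfolding is_ideal_def by blast

lemma ideal_sum:
  assumes "is_ideal I" and "\<And>i. i \<in> A \<Longrightarrow> f i \<in> I"
  shows "sum f A \<in> I"
  using assms(2)
proof (induction A rule: infinite_finite_induct)
  case (insert x F)
  then show ?case by (simp add: ideal_add [OF assms(1)])
qed (simp_all add: ideal_zero [OF assms(1)])

lemma is_ideal_frob_bracket: "is_ideal (frob_bracket p n a)"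
  unfolding frob_bracket_def by (rule is_ideal_ideal_gen)

lemma power_in_frob_bracket: "x \<in> a \<Longrightarrow> x ^ p ^ n \<in> frob_bracket p n a"
  unfolding frob_bracket_def by (rule subsetD [OF ideal_gen_superset], rule imageI)

lemma is_ideal_frobenius_preimage:
  fixes J :: "'a::comm_ring_1 set"
  assumes char: "prime CHAR('a)" and J: "is_ideal J"
  shows "is_ideal {x. x ^ CHAR('a) ^ m \<in> J}"
proof -
  have "(0::'a) ^ CHAR('a) ^ m = 0"
    using prime_gt_0_nat [OF char] by (simp add: zero_power)
  moreover have "(x + y) ^ CHAR('a) ^ m = x ^ CHAR('a) ^ m + y ^ CHAR('a) ^ m" for x y :: 'a
    using freshmans_dream' [OF char refl] .
  ultimately show ?thesis
    using ideal_zero [OF J] ideal_add [OF J] ideal_mult [OF J]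
    unfolding is_ideal_def by (simp add: power_mult_distrib)
qed

lemma frob_bracket_frob_bracket:
  fixes a :: "'a::comm_ring_1 set"
  assumes "prime CHAR('a)"
  shows "frob_bracket CHAR('a) m (frob_bracket CHAR('a) n a) = frob_bracket CHAR('a) (n + m) a"
    (is "?lhs = ?rhs")
proof
  have "frob_bracket CHAR('a) n a \<subseteq> {x. x ^ CHAR('a) ^ m \<in> ?rhs}"
    unfolding frob_bracket_def [of _ n]
    using power_in_frob_bracket [of _ a _ "n + m"]
    by (intro ideal_gen_minimal is_ideal_frobenius_preimage assms is_ideal_frob_bracket)
       (auto simp: power_add power_mult)
  then show "?lhs \<subseteq> ?rhs"
    unfolding frob_bracket_def [of _ m]
    by (intro ideal_gen_minimal is_ideal_frob_bracket) blast
  show "?rhs \<subseteq> ?lhs"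
    unfolding frob_bracket_def [of _ "n + m"]
  proof (intro ideal_gen_minimal is_ideal_frob_bracket, clarify)
    fix x assume "x \<in> a"
    then have "(x ^ CHAR('a) ^ n) ^ CHAR('a) ^ m \<in> ?lhs"
      by (intro power_in_frob_bracket)
    then show "x ^ CHAR('a) ^ (n + m) \<in> ?lhs"
      by (simp add: power_add power_mult)
  qed
qed

lemma power_in_frob_bracket_add:
  fixes a :: "'a::comm_ring_1 set"
  assumes "prime CHAR('a)" and "r ^ CHAR('a) ^ n \<in> frob_bracket CHAR('a) n a"
  shows "r ^ CHAR('a) ^ (n + k) \<in> frob_bracket CHAR('a) (n + k) a"
  using power_in_frob_bracket [OF assms(2), of "CHAR('a)" k]
  by (simp add: frob_bracket_frob_bracket [OF assms(1)] power_add power_mult)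

lemma is_ideal_frob_closure:
  fixes a :: "'a::comm_ring_1 set"
  assumes "prime CHAR('a)"
  shows "is_ideal (frob_closure CHAR('a) a)"
  unfolding is_ideal_def frob_closure_def
proof (intro conjI ballI allI; clarsimp)
  show "\<exists>n. (0::'a) ^ CHAR('a) ^ n \<in> frob_bracket CHAR('a) n a"
    by (rule exI [of _ 0]) (simp add: ideal_zero is_ideal_frob_bracket)
  fix x y :: 'a and n m
  assume x: "x ^ CHAR('a) ^ n \<in> frob_bracket CHAR('a) n a"
    and y: "y ^ CHAR('a) ^ m \<in> frob_bracket CHAR('a) m a"
  have "x ^ CHAR('a) ^ (n + m) \<in> frob_bracket CHAR('a) (n + m) a"
    using power_in_frob_bracket_add [OF assms x] .
  moreover have "y ^ CHAR('a) ^ (n + m) \<in> frob_bracket CHAR('a) (n + m) a"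
    using power_in_frob_bracket_add [OF assms y, of n] by (simp add: add.commute)
  ultimately have "(x + y) ^ CHAR('a) ^ (n + m) \<in> frob_bracket CHAR('a) (n + m) a"
    using assms by (simp add: freshmans_dream' ideal_add is_ideal_frob_bracket)
  then show "\<exists>n. (x + y) ^ CHAR('a) ^ n \<in> frob_bracket CHAR('a) n a" ..
next
  fix r x :: 'a and n
  assume "x ^ CHAR('a) ^ n \<in> frob_bracket CHAR('a) n a"
  then show "\<exists>n. (r * x) ^ CHAR('a) ^ n \<in> frob_bracket CHAR('a) n a"
    by (auto simp: power_mult_distrib intro: ideal_mult [OF is_ideal_frob_bracket])
qed

lemma one_in_R_circ: "1 \<in> R_circ"
  unfolding R_circ_def
proof (intro CollectI allI impI notI)
  fix P :: "'a set"
  assume "minimal_prime P" and "1 \<in> P"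
  then have P: "prime_ideal P"
    by (simp add: minimal_prime_def)
  with \<open>1 \<in> P\<close> have "x \<in> P" for x
    using ideal_mult [of P 1 x] by (simp add: prime_ideal_def)
  with P show False
    by (auto simp: prime_ideal_def)
qed

lemma R_circ_mult: "c \<in> R_circ \<Longrightarrow> d \<in> R_circ \<Longrightarrow> c * d \<in> R_circ"
  unfolding R_circ_def minimal_prime_def prime_ideal_def by auto

lemma R_circ_power: "c \<in> R_circ \<Longrightarrow> c ^ n \<in> R_circ"
  by (induction n) (auto simp: one_in_R_circ R_circ_mult)

lemma frob_closure_subset_tight_closure:
  fixes a :: "'a::comm_ring_1 set"
  assumes "prime CHAR('a)"
  shows "frob_closure CHAR('a) a \<subseteq> tight_closure CHAR('a) a"
proof
  fix x assume "x \<in> frob_closure CHAR('a) a"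
  then obtain k where "x ^ CHAR('a) ^ k \<in> frob_bracket CHAR('a) k a"
    by (auto simp: frob_closure_def)
  then have "\<forall>n\<ge>k. 1 * x ^ CHAR('a) ^ n \<in> frob_bracket CHAR('a) n a"
    using power_in_frob_bracket_add [OF assms] by (metis le_add_diff_inverse mult_1)
  then show "x \<in> tight_closure CHAR('a) a"
    unfolding tight_closure_def using one_in_R_circ by blast
qed

lemma weak_test_element_R_circ: "weak_test_element p w0 c \<Longrightarrow> c \<in> R_circ"
  unfolding weak_test_element_def by blast

lemma weak_test_element_tight_closure_iff:
  "weak_test_element p w0 c \<Longrightarrow> is_ideal b \<Longrightarrow>
     x \<in> tight_closure p b \<longleftrightarrow> (\<forall>n\<ge>w0. c * x ^ p ^ n \<in> frob_bracket p n b)"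
  unfolding weak_test_element_def by blast

lemma test_multiple_in_frob_closure:
  fixes b :: "'a::comm_ring_1 set"
  assumes char: "prime CHAR('a)" and c: "weak_test_element CHAR('a) w0 c" and "is_ideal b"
    and "x \<in> tight_closure CHAR('a) b"
  shows "c * x ^ CHAR('a) ^ i \<in> frob_closure CHAR('a) (frob_bracket CHAR('a) i b)"
proof -
  let ?q = "CHAR('a) ^ w0"
  have "\<forall>n\<ge>w0. c * x ^ CHAR('a) ^ n \<in> frob_bracket CHAR('a) n b"
    using assms(4) weak_test_element_tight_closure_iff [OF c \<open>is_ideal b\<close>] by blast
  then have "c * x ^ CHAR('a) ^ (i + w0) \<in> frob_bracket CHAR('a) w0 (frob_bracket CHAR('a) i b)"
    by (simp add: frob_bracket_frob_bracket [OF char])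
  then have "c ^ (?q - 1) * (c * x ^ CHAR('a) ^ (i + w0))
               \<in> frob_bracket CHAR('a) w0 (frob_bracket CHAR('a) i b)"
    by (rule ideal_mult [OF is_ideal_frob_bracket])
  moreover have "c ^ (?q - 1) * (c * x ^ CHAR('a) ^ (i + w0)) = (c * x ^ CHAR('a) ^ i) ^ ?q"
  proof -
    have "?q = Suc (?q - 1)"
      using prime_gt_0_nat [OF char] by simp
    then have "c ^ (?q - 1) * c = c ^ ?q"
      by (metis power_Suc2)
    then show ?thesis
      by (simp add: power_mult_distrib power_add flip: power_mult mult.assoc)
  qed
  ultimately show ?thesis
    unfolding frob_closure_def by auto
qed

lemma tight_closure_if_test_multiples_in_frob_closure:
  fixes b :: "'a::comm_ring_1 set"
  assumes char: "prime CHAR('a)" and c: "weak_test_element CHAR('a) w0 c"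
    and F: "\<And>i. c * x ^ CHAR('a) ^ i \<in> frob_closure CHAR('a) (frob_bracket CHAR('a) i b)"
  shows "x \<in> tight_closure CHAR('a) b"
proof -
  let ?d = "c ^ (1 + CHAR('a) ^ w0)"
  have "?d * x ^ CHAR('a) ^ (i + w0) \<in> frob_bracket CHAR('a) (i + w0) b" for i
  proof -
    have "c * x ^ CHAR('a) ^ i \<in> tight_closure CHAR('a) (frob_bracket CHAR('a) i b)"
      using F frob_closure_subset_tight_closure [OF char] by blast
    then have "c * (c * x ^ CHAR('a) ^ i) ^ CHAR('a) ^ w0
                 \<in> frob_bracket CHAR('a) w0 (frob_bracket CHAR('a) i b)"
      using weak_test_element_tight_closure_iff [OF c is_ideal_frob_bracket] by blast
    moreover have "c * (c * x ^ CHAR('a) ^ i) ^ CHAR('a) ^ w0 = ?d * x ^ CHAR('a) ^ (i + w0)"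
      by (simp add: power_mult_distrib power_add mult.assoc flip: power_mult)
    ultimately show ?thesis
      by (simp add: frob_bracket_frob_bracket [OF char])
  qed
  then have "\<forall>n\<ge>w0. ?d * x ^ CHAR('a) ^ n \<in> frob_bracket CHAR('a) n b"
    using le_add_diff_inverse2 by metis
  moreover have "?d \<in> R_circ"
    using R_circ_power weak_test_element_R_circ [OF c] .
  ultimately show ?thesis
    unfolding tight_closure_def by blast
qed

lemma tight_closure_iff_frob_closure:
  fixes b :: "'a::comm_ring_1 set"
  assumes "prime CHAR('a)" and "weak_test_element CHAR('a) w0 c" and "is_ideal b"
  shows "x \<in> tight_closure CHAR('a) b \<longleftrightarrow>
           (\<forall>i. c * x ^ CHAR('a) ^ i \<in> frob_closure CHAR('a) (frob_bracket CHAR('a) i b))"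
  using test_multiple_in_frob_closure [OF assms]
    tight_closure_if_test_multiples_in_frob_closure [OF assms(1,2)] by blast

lemma frob_act_monomial:
  "frob_act p (\<lambda>j. if j = i then c else 0) h (n + i) = c * h n ^ p ^ i"
  unfolding frob_act_def by (simp add: if_distrib [where f="\<lambda>x. x * _"] cong: if_cong)

lemma monomial_in_cx_sum:
  assumes "w \<le> i"
  shows "(\<lambda>j. if j = i then c else 0) \<in> cx_sum c w"
proof -
  have "\<exists>r. (if j = i then c else 0) = r * c" for j
    using mult_1 [of c] mult_zero_left [of c] by metis
  then show ?thesis
    unfolding cx_sum_def fin_supp_def using assms
    by (intro CollectI conjI exI [of _ "Suc i"]) auto
qed

lemma graded_ann_cx_sum:
  assumes J: "\<And>k. is_ideal (J k)"
  shows "graded_ann p J (cx_sum c w) =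
           {h. fin_supp h \<and> (\<forall>n. \<forall>i\<ge>w. c * h n ^ p ^ i \<in> J (n + i))}"
proof (intro set_eqI iffI)
  fix h assume h: "h \<in> graded_ann p J (cx_sum c w)"
  have "c * h n ^ p ^ i \<in> J (n + i)" if "w \<le> i" for n i
  proof -
    have "frob_act p (\<lambda>j. if j = i then c else 0) h (n + i) \<in> J (n + i)"
      using h monomial_in_cx_sum [OF that] unfolding graded_ann_def by blast
    then show ?thesis by (simp add: frob_act_monomial)
  qed
  with h show "h \<in> {h. fin_supp h \<and> (\<forall>n. \<forall>i\<ge>w. c * h n ^ p ^ i \<in> J (n + i))}"
    by (simp add: graded_ann_def)
next
  fix h assume "h \<in> {h. fin_supp h \<and> (\<forall>n. \<forall>i\<ge>w. c * h n ^ p ^ i \<in> J (n + i))}"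
  then have "fin_supp h" and h: "\<And>n i. w \<le> i \<Longrightarrow> c * h n ^ p ^ i \<in> J (n + i)"
    by auto
  have "frob_act p \<theta> h k \<in> J k" if \<theta>: "\<theta> \<in> cx_sum c w" for \<theta> k
  proof -
    have "\<theta> i * h (k - i) ^ p ^ i \<in> J k" if "i \<le> k" for i
    proof (cases "w \<le> i")
      case True
      obtain r where "\<theta> i = r * c"
        using \<theta> by (auto simp: cx_sum_def)
      moreover have "c * h (k - i) ^ p ^ i \<in> J k"
        using h [OF True, of "k - i"] \<open>i \<le> k\<close> by simp
      ultimately show ?thesis
        by (simp add: ideal_mult [OF J] mult.assoc)
    next
      case False
      then show ?thesis
        using \<theta> ideal_zero [OF J] by (simp add: cx_sum_def)
    qed
    then show ?thesis
      unfolding frob_act_def by (auto intro: ideal_sum [OF J])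
  qed
  with \<open>fin_supp h\<close> show "h \<in> graded_ann p J (cx_sum c w)"
    by (simp add: graded_ann_def)
qed

theorem proposition2p4:
  fixes p w0 :: nat and c :: "'a::comm_ring_1" and a :: "'a set"
  assumes "noetherian_ring TYPE('a)"
    and "prime p" and "CHAR('a) = p"
    and "weak_test_element p w0 c"
    and "is_ideal a"
  shows "graded_ann p (\<lambda>n. frob_bracket p n a) (cx_sum c w0)
           = {h. fin_supp h \<and> (\<forall>n. h n \<in> tight_closure p (frob_bracket p n a))}
         \<and> graded_ann p (\<lambda>n. frob_closure p (frob_bracket p n a)) (cx_sum c 0)
           = {h. fin_supp h \<and> (\<forall>n. h n \<in> tight_closure p (frob_bracket p n a))}"
proof -
  have char: "prime CHAR('a)" and c: "weak_test_element CHAR('a) w0 c"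
    using assms(2-4) by simp_all
  have frob_bracket_add:
    "frob_bracket CHAR('a) (n + i) a = frob_bracket CHAR('a) i (frob_bracket CHAR('a) n a)" for n i
    by (simp add: frob_bracket_frob_bracket [OF char])
  have "graded_ann CHAR('a) (\<lambda>n. frob_bracket CHAR('a) n a) (cx_sum c w0)
          = {h. fin_supp h \<and> (\<forall>n. h n \<in> tight_closure CHAR('a) (frob_bracket CHAR('a) n a))}"
    unfolding graded_ann_cx_sum [OF is_ideal_frob_bracket] frob_bracket_add
    by (simp add: weak_test_element_tight_closure_iff [OF c is_ideal_frob_bracket])
  moreover have "graded_ann CHAR('a) (\<lambda>n. frob_closure CHAR('a) (frob_bracket CHAR('a) n a)) (cx_sum c 0)
          = {h. fin_supp h \<and> (\<forall>n. h n \<in> tight_closure CHAR('a) (frob_bracket CHAR('a) n a))}"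
    unfolding graded_ann_cx_sum [OF is_ideal_frob_closure [OF char]] frob_bracket_add
    by (simp add: tight_closure_iff_frob_closure [OF char c is_ideal_frob_bracket])
  ultimately show ?thesis
    using assms(3) by simp
qed

end
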